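(* Let $\mathbb{H}$ be any real Hilbert space (of dimension at least $2$) and $T\in\mathbb{L}(\ell_4^2,\mathbb{H})$ of rank one with $\|T\|=1$. Then $T$ is an extreme contraction if and only if $M_T=\{\pm(1,0)\}$ or $M_T=\{\pm(0,1)\}$. In particular, if $\mathbb{H}=\ell_2^n$, then the rank one extreme contractions in $\mathbb{L}(\ell_4^2,\ell_2^n)$ are exactly the operators whose matrix representations with respect to the standard ordered bases are of the form $\begin{bmatrix} x_1&0\\ x_2&0\\ \vdots&\vdots\\ x_n&0\end{bmatrix}$ or $\begin{bmatrix} 0&x_1\\ 0&x_2\\ \vdots&\vdots\\ 0&x_n\end{bmatrix}$, where $x_1^2+x_2^2+\cdots+x_n^2=1$.
   Context: $\ell_q^m$ is $\mathbb{R}^m$ with the $q$-norm. $M_T=\{u\in\ell_4^2:\|u\|=1,\ \|Tu\|=\|T\|\}$. An extreme contraction is a norm one operator that is an extreme point of the closed unit ball of $\mathbb{L}(\ell_4^2,\mathbb{H})$ (bounded linear operators, operator norm). *)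

theory Defs
  imports "HOL-Analysis.Analysis"
begin

definition norm4 :: "real \<times> real \<Rightarrow> real" where
  "norm4 u = root 4 ((fst u) ^ 4 + (snd u) ^ 4)"

definition opnorm4 :: "(real \<times> real \<Rightarrow> 'h::real_normed_vector) \<Rightarrow> real" where
  "opnorm4 T = (SUP u\<in>{u. norm4 u = 1}. norm (T u))"

definition MT :: "(real \<times> real \<Rightarrow> 'h::real_normed_vector) \<Rightarrow> (real \<times> real) set" where
  "MT T = {u. norm4 u = 1 \<and> norm (T u) = opnorm4 T}"

definition unit_ball4 :: "(real \<times> real \<Rightarrow> 'h::real_normed_vector) set" where
  "unit_ball4 = {S. linear S \<and> opnorm4 S \<le> 1}"

definition extreme_contraction :: "(real \<times> real \<Rightarrow> 'h::real_normed_vector) \<Rightarrow> bool" where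
  "extreme_contraction T \<longleftrightarrow> linear T \<and> opnorm4 T = 1 \<and> T \<in> unit_ball4 \<and>
     (\<forall>S1\<in>unit_ball4. \<forall>S2\<in>unit_ball4. \<forall>t::real. 0 < t \<and> t < 1 \<and>
        T = (\<lambda>u. t *\<^sub>R S1 u + (1 - t) *\<^sub>R S2 u) \<longrightarrow> S1 = S2)"

end

(*
  A rank one operator has the form T u = (a x + b y) h with h a unit vector, and
  \<parallel>T\<parallel> = 1 says that the functional (a, b) has norm one in the dual space \<ell>_{4/3}.

  If b = 0, a decomposition T = t S1 + (1 - t) S2 inside the unit ball forces S1 (1,0) = S2 (1,0)
  = T (1,0) by strict convexity of the Hilbert space; then \<parallel>S (1,t)\<parallel>\<^sup>4 \<le> 1 + t\<^sup>4 forces S (0,1) = 0,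
  because the Hilbert norm of S (1,0) + t S (0,1) grows quadratically in t.  Hence T is extreme and
  attains its norm only at \<plusminus>(1,0).  The same argument shows that an operator attaining its norm at
  (1,0) kills (0,1), which gives the converse for M_T.

  If a = s\<^sup>3 and b = r\<^sup>3 are both nonzero, the defect in Hoelder's inequality for (s\<^sup>3, r\<^sup>3) is an
  explicit sum of squares with the factor (r x - s y)\<^sup>2, so T \<plusminus> \<delta> (r x - s y) k, with k a unit
  vector orthogonal to h, are both contractions for small \<delta> > 0, and T is their midpoint.
*)

theory Submission
  imports Defs
begin

lemma abs_le_1_if_power4_le_1: "(x::real)^4 \<le> 1 \<Longrightarrow> \<bar>x\<bar> \<le> 1"
  using power_le_one_iff[of "\<bar>x\<bar>" 4] by simp

text \<open>Hoelder's inequality for \<open>(s\<^sup>3, r\<^sup>3) \<in> \<ell>\<^sub>4\<^sub>/\<^sub>3\<close> against \<open>(x, y) \<in> \<ell>\<^sub>4\<close>, with its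
  defect written as a sum of squares carrying the factor \<open>(r x - s y)\<^sup>2\<close>.\<close>

lemma power4_hoelder_defect:
  fixes s r x y :: real
  shows "(s^4 + r^4)^3 * (x^4 + y^4) = (s^3*x + r^3*y)^4 + (r*x - s*y)^2 *
    ((s^8 + 3 * s^4 * r^4 + r^8) * (r*x + s*y)^2 + 2 * r^2 * s^8 * x^2 + 2 * s^2 * r^8 * y^2)"
  by algebra

lemma power4_hoelder_defect_factor_bounds:
  fixes s r x y :: real
  assumes "\<bar>s\<bar> \<le> 1" "\<bar>r\<bar> \<le> 1"
  shows "(s^3*x + r^3*y)^2 \<le> 2 * (s^6 * x^2 + r^6 * y^2)"
    and "(r * s)^6 * (r*x - s*y)^2 \<le> 2 * (s^6 * x^2 + r^6 * y^2)"
    and "2 * (r * s)^2 * (s^6 * x^2 + r^6 * y^2) \<le>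
      (s^8 + 3 * s^4 * r^4 + r^8) * (r*x + s*y)^2 + 2 * r^2 * s^8 * x^2 + 2 * s^2 * r^8 * y^2"
proof -
  have "\<bar>s\<bar>^n \<le> 1" "\<bar>r\<bar>^n \<le> 1" for n using assms by (simp_all add: power_le_one)
  from this[of 2] this[of 6] have "s^2 \<le> 1" "r^2 \<le> 1" "s^6 \<le> 1" "r^6 \<le> 1" by simp_all
  have "2 * (s^6 * x^2 + r^6 * y^2) - (s^3*x + r^3*y)^2 = (s^3*x - r^3*y)^2" by algebra
  then show "(s^3*x + r^3*y)^2 \<le> 2 * (s^6 * x^2 + r^6 * y^2)" by (metis diff_ge_0_iff_ge zero_le_power2)
  have q: "(r*x - s*y)^2 \<le> 2 * (x^2 + y^2)"
  proof -
    have "2 * (r^2 * x^2 + s^2 * y^2) - (r*x - s*y)^2 = (r*x + s*y)^2" by algebra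
    moreover have "r^2 * x^2 \<le> x^2" "s^2 * y^2 \<le> y^2"
      using \<open>r^2 \<le> 1\<close> \<open>s^2 \<le> 1\<close> by (simp_all add: mult_left_le_one_le)
    ultimately show ?thesis by (smt (verit) zero_le_power2)
  qed
  have E: "(r * s)^6 * (x^2 + y^2) \<le> s^6 * x^2 + r^6 * y^2"
  proof -
    have "r^6 * (s^6 * x^2) \<le> s^6 * x^2" "s^6 * (r^6 * y^2) \<le> r^6 * y^2"
      using \<open>r^6 \<le> 1\<close> \<open>s^6 \<le> 1\<close> by (simp_all add: mult_left_le_one_le)
    then show ?thesis by (simp add: algebra_simps)
  qed
  have "(r * s)^6 * (r*x - s*y)^2 \<le> (r * s)^6 * (2 * (x^2 + y^2))"
    using q by (rule mult_left_mono) simp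
  also have "\<dots> = 2 * ((r * s)^6 * (x^2 + y^2))" by (simp only: mult.left_commute)
  also have "\<dots> \<le> 2 * (s^6 * x^2 + r^6 * y^2)" using E by (rule mult_left_mono) simp
  finally show "(r * s)^6 * (r*x - s*y)^2 \<le> 2 * (s^6 * x^2 + r^6 * y^2)" .
  have "(s^8 + 3 * s^4 * r^4 + r^8) * (r*x + s*y)^2 + 2 * r^2 * s^8 * x^2 + 2 * s^2 * r^8 * y^2
      - 2 * (r * s)^2 * (s^6 * x^2 + r^6 * y^2) = (s^8 + 3 * s^4 * r^4 + r^8) * (r*x + s*y)^2"
    by algebra
  moreover have "0 \<le> (s^8 + 3 * s^4 * r^4 + r^8) * (r*x + s*y)^2" by simp
  ultimately show "2 * (r * s)^2 * (s^6 * x^2 + r^6 * y^2) \<le>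
      (s^8 + 3 * s^4 * r^4 + r^8) * (r*x + s*y)^2 + 2 * r^2 * s^8 * x^2 + 2 * s^2 * r^8 * y^2"
    by linarith
qed

lemma power4_hoelder_defect_factor_ge:
  fixes s r x y e :: real
  assumes "\<bar>s\<bar> \<le> 1" "\<bar>r\<bar> \<le> 1" and e: "0 \<le> e" "e \<le> (r * s)^8 / 4"
  shows "2 * e * (s^3*x + r^3*y)^2 + e^2 * (r*x - s*y)^2 \<le>
    (s^8 + 3 * s^4 * r^4 + r^8) * (r*x + s*y)^2 + 2 * r^2 * s^8 * x^2 + 2 * s^2 * r^8 * y^2"
proof -
  note bounds = power4_hoelder_defect_factor_bounds[OF assms(1,2), of x y]
  define E where "E = s^6 * x^2 + r^6 * y^2"
  define d where "d = (r * s)^2"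
  have "0 \<le> E" "0 \<le> d" by (simp_all add: E_def d_def)
  have "d \<le> 1" using assms(1,2) by (simp add: d_def power_mult_distrib abs_square_le_1 mult_le_one)
  then have d4: "d^4 \<le> d" and d5: "d^5 \<le> d" using \<open>0 \<le> d\<close> by (simp_all add: power_decreasing[of 1, simplified])
  have "2 * e * (s^3*x + r^3*y)^2 \<le> d * E"
  proof -
    have "4 * e \<le> d" using e(2) d4 by (simp add: d_def flip: power_mult)
    then have "4 * e * E \<le> d * E" using \<open>0 \<le> E\<close> by (rule mult_right_mono)
    moreover have "2 * e * (s^3*x + r^3*y)^2 \<le> 2 * e * (2 * E)"
      using bounds(1) e(1) by (simp add: E_def mult_left_mono)
    ultimately show ?thesis by (simp add: algebra_simps)
  qed
  moreover have "e^2 * (r*x - s*y)^2 \<le> d * E"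
  proof -
    have "e^2 \<le> ((r * s)^8 / 4)^2" using e(2,1) by (rule power_mono)
    also have "\<dots> = (r * s)^6 * d^5 / 16" by (simp add: d_def power_divide flip: power_mult power_add)
    also have "\<dots> \<le> (r * s)^6 * d / 16" using d5 by (simp add: mult_left_mono)
    finally have "e^2 * (r*x - s*y)^2 \<le> d / 16 * ((r * s)^6 * (r*x - s*y)^2)"
      by (rule mult_right_mono[THEN order_trans]) (simp_all add: algebra_simps)
    also have "\<dots> \<le> d / 16 * (2 * E)" using bounds(2) \<open>0 \<le> d\<close> by (simp add: E_def mult_left_mono)
    also have "\<dots> = d * E / 8" by simp
    finally show ?thesis using mult_nonneg_nonneg[OF \<open>0 \<le> d\<close> \<open>0 \<le> E\<close>] by linarith
  qed
  ultimately show ?thesis using bounds(3) \<open>0 \<le> d\<close> \<open>0 \<le> E\<close> unfolding E_def d_def by linarith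
qed

lemma perturbation_bound:
  fixes s r x y e :: real
  assumes sr: "s^4 + r^4 \<le> 1" and e: "0 \<le> e" "e \<le> (r * s)^8 / 4"
  shows "((s^3*x + r^3*y)^2 + e * (r*x - s*y)^2)^2 \<le> x^4 + y^4"
proof -
  have "0 \<le> s^4" "0 \<le> r^4" by simp_all
  then have "s^4 \<le> 1" "r^4 \<le> 1" using sr by linarith+
  then have "\<bar>s\<bar> \<le> 1" "\<bar>r\<bar> \<le> 1" by (simp_all add: abs_le_1_if_power4_le_1)
  note defect_ge = power4_hoelder_defect_factor_ge[OF this e, of x y]
  have "((s^3*x + r^3*y)^2 + e * (r*x - s*y)^2)^2 = (s^3*x + r^3*y)^4 + (r*x - s*y)^2 *
      (2 * e * (s^3*x + r^3*y)^2 + e^2 * (r*x - s*y)^2)"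
    by algebra
  also have "\<dots> \<le> (s^4 + r^4)^3 * (x^4 + y^4)"
    unfolding power4_hoelder_defect using defect_ge by (simp add: mult_left_mono)
  also have "\<dots> \<le> x^4 + y^4" using sr \<open>0 \<le> s^4\<close> \<open>0 \<le> r^4\<close> by (simp add: power_le_one mult_left_le_one_le)
  finally show ?thesis .
qed

lemma sum_power4_le_1_if_dual_bound:
  fixes s r :: real
  assumes "\<And>x y. (s^3*x + r^3*y)^4 \<le> x^4 + y^4"
  shows "s^4 + r^4 \<le> 1"
proof (rule ccontr)
  define m where "m = s^4 + r^4"
  assume "\<not> s^4 + r^4 \<le> 1"
  then have "1 < m" by (simp add: m_def)
  then have "m^1 < m^4" by (intro power_strict_increasing) simp_all
  moreover have "s^3 * s + r^3 * r = m" unfolding m_def by algebra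
  then have "m^4 \<le> m" using assms[of s r] by (simp add: m_def)
  ultimately show False by simp
qed

lemma norm4_eq_1_iff: "norm4 u = 1 \<longleftrightarrow> fst u^4 + snd u^4 = 1"
  by (simp add: norm4_def)

lemma abs_fst_snd_le_1_if_norm4_eq_1:
  assumes "norm4 u = 1" shows "\<bar>fst u\<bar> \<le> 1" "\<bar>snd u\<bar> \<le> 1"
proof -
  have "0 \<le> fst u^4" "0 \<le> snd u^4" by simp_all
  then have "fst u^4 \<le> 1" "snd u^4 \<le> 1" using assms unfolding norm4_eq_1_iff by linarith+
  then show "\<bar>fst u\<bar> \<le> 1" "\<bar>snd u\<bar> \<le> 1" by (simp_all add: abs_le_1_if_power4_le_1)
qed

lemma linear_on_pair:
  assumes "linear S" shows "S u = fst u *\<^sub>R S (1, 0) + snd u *\<^sub>R S (0, 1)"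
proof -
  have "u = fst u *\<^sub>R (1, 0) + snd u *\<^sub>R (0, 1::real)" by simp
  then show ?thesis by (metis assms linear_add linear_scale)
qed

lemma norm_le_opnorm4:
  fixes S :: "real \<times> real \<Rightarrow> 'h::real_normed_vector"
  assumes S: "linear S" and u: "norm4 u = 1"
  shows "norm (S u) \<le> opnorm4 S"
proof -
  have "norm (S v) \<le> norm (S (1, 0)) + norm (S (0, 1))" if "norm4 v = 1" for v
  proof -
    have "norm (S v) \<le> \<bar>fst v\<bar> * norm (S (1, 0)) + \<bar>snd v\<bar> * norm (S (0, 1))"
      using linear_on_pair[OF S, of v] norm_triangle_ineq[of "fst v *\<^sub>R S (1, 0)" "snd v *\<^sub>R S (0, 1)"]
      by simp
    also have "\<dots> \<le> norm (S (1, 0)) + norm (S (0, 1))"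
      using abs_fst_snd_le_1_if_norm4_eq_1[OF that]
      by (intro add_mono mult_left_le_one_le) simp_all
    finally show ?thesis .
  qed
  then have "bdd_above ((\<lambda>v. norm (S v)) ` {v. norm4 v = 1})" by (rule bdd_aboveI2) simp
  then show ?thesis unfolding opnorm4_def by (rule cSUP_upper[rotated]) (simp add: u)
qed

lemma opnorm4_le:
  assumes "\<And>u. norm4 u = 1 \<Longrightarrow> norm (S u) \<le> c"
  shows "opnorm4 S \<le> c"
  unfolding opnorm4_def
proof (rule cSUP_least)
  show "{u. norm4 u = 1} \<noteq> {}" using norm4_eq_1_iff[of "(1, 0)"] by auto
qed (use assms in auto)

lemma norm_power4_le_if_opnorm4_le_1:
  fixes S :: "real \<times> real \<Rightarrow> 'h::real_normed_vector"
  assumes S: "linear S" and le1: "opnorm4 S \<le> 1"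
  shows "norm (S (x, y))^4 \<le> x^4 + y^4"
proof (cases "x^4 + y^4 = 0")
  case True
  then have "x = 0" "y = 0" by (simp_all add: add_nonneg_eq_0_iff)
  then show ?thesis using linear_0[OF S] by (simp add: zero_prod_def)
next
  case False
  define \<rho> where "\<rho> = root 4 (x^4 + y^4)"
  have "0 \<le> x^4 + y^4" by simp
  then have "0 < x^4 + y^4" using False by (simp add: order_le_less)
  then have "0 < \<rho>" and \<rho>4: "\<rho>^4 = x^4 + y^4" by (simp_all add: \<rho>_def)
  have "(x / \<rho>)^4 + (y / \<rho>)^4 = (x^4 + y^4) / \<rho>^4" by (simp add: power_divide add_divide_distrib)
  then have "norm4 (x / \<rho>, y / \<rho>) = 1" using False by (simp add: norm4_eq_1_iff \<rho>4)
  then have "norm (S (x / \<rho>, y / \<rho>)) \<le> 1" using norm_le_opnorm4[OF S] le1 by force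
  moreover have "S (x, y) = \<rho> *\<^sub>R S (x / \<rho>, y / \<rho>)"
    using linear_scale[OF S, of \<rho> "(x / \<rho>, y / \<rho>)"] \<open>0 < \<rho>\<close> by simp
  ultimately have "norm (S (x, y)) \<le> \<rho>" using \<open>0 < \<rho>\<close> by (simp add: mult_left_le)
  then have "norm (S (x, y))^4 \<le> \<rho>^4" by (rule power_mono) simp
  then show ?thesis using \<rho>4 by simp
qed

lemma opnorm4_le_1_iff:
  fixes S :: "real \<times> real \<Rightarrow> 'h::real_normed_vector"
  assumes S: "linear S"
  shows "opnorm4 S \<le> 1 \<longleftrightarrow> (\<forall>x y. norm (S (x, y))^4 \<le> x^4 + y^4)"
proof
  assume bound: "\<forall>x y. norm (S (x, y))^4 \<le> x^4 + y^4"
  show "opnorm4 S \<le> 1"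
  proof (rule opnorm4_le)
    fix u :: "real \<times> real"
    assume "norm4 u = 1"
    then have "norm (S u)^4 \<le> 1" using bound[rule_format, of "fst u" "snd u"] by (simp add: norm4_eq_1_iff)
    then show "norm (S u) \<le> 1" by (simp add: power_le_one_iff)
  qed
qed (use S norm_power4_le_if_opnorm4_le_1 in blast)

lemma unit_ball4_iff:
  "S \<in> unit_ball4 \<longleftrightarrow> linear S \<and> (\<forall>x y. norm (S (x, y))^4 \<le> x^4 + y^4)"
  using opnorm4_le_1_iff unfolding unit_ball4_def by blast

lemma norm_le_1_if_unit_ball4:
  assumes "S \<in> unit_ball4" "norm4 u = 1" shows "norm (S u) \<le> 1"
  using assms norm_le_opnorm4[of S u] unfolding unit_ball4_def by simp

lemma linear_fst_column: "linear (\<lambda>u. fst u *\<^sub>R k)"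
  by (intro linearI) (simp_all add: scaleR_add_left)

lemma linear_snd_column: "linear (\<lambda>u. snd u *\<^sub>R k)"
  by (intro linearI) (simp_all add: scaleR_add_left)

lemma opnorm4_fst_column: "opnorm4 (\<lambda>u. fst u *\<^sub>R k) = norm k"
proof (rule antisym)
  show "opnorm4 (\<lambda>u. fst u *\<^sub>R k) \<le> norm k"
    by (rule opnorm4_le) (simp add: abs_fst_snd_le_1_if_norm4_eq_1 mult_left_le_one_le)
  show "norm k \<le> opnorm4 (\<lambda>u. fst u *\<^sub>R k)"
    using norm_le_opnorm4[OF linear_fst_column norm4_eq_1_iff[of "(1, 0)", THEN iffD2]] by simp
qed

lemma opnorm4_snd_column: "opnorm4 (\<lambda>u. snd u *\<^sub>R k) = norm k"
proof (rule antisym)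
  show "opnorm4 (\<lambda>u. snd u *\<^sub>R k) \<le> norm k"
    by (rule opnorm4_le) (simp add: abs_fst_snd_le_1_if_norm4_eq_1 mult_left_le_one_le)
  show "norm k \<le> opnorm4 (\<lambda>u. snd u *\<^sub>R k)"
    using norm_le_opnorm4[OF linear_snd_column norm4_eq_1_iff[of "(0, 1)", THEN iffD2]] by simp
qed

lemma MT_fst_column:
  assumes "k \<noteq> 0" shows "MT (\<lambda>u. fst u *\<^sub>R k) = {(1, 0), (-1, 0)}"
proof -
  have "MT (\<lambda>u. fst u *\<^sub>R k) = {u. fst u^4 + snd u^4 = 1 \<and> \<bar>fst u\<bar> = 1}"
    using assms by (simp add: MT_def opnorm4_fst_column norm4_eq_1_iff)
  also have "\<dots> = {(1, 0), (-1, 0)}" by (auto simp: abs_if split: if_splits)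
  finally show ?thesis .
qed

lemma MT_snd_column:
  assumes "k \<noteq> 0" shows "MT (\<lambda>u. snd u *\<^sub>R k) = {(0, 1), (0, -1)}"
proof -
  have "MT (\<lambda>u. snd u *\<^sub>R k) = {u. fst u^4 + snd u^4 = 1 \<and> \<bar>snd u\<bar> = 1}"
    using assms by (simp add: MT_def opnorm4_snd_column norm4_eq_1_iff)
  also have "\<dots> = {(0, 1), (0, -1)}" by (auto simp: abs_if split: if_splits)
  finally show ?thesis .
qed

definition unit_column :: "(real \<times> real \<Rightarrow> 'h::real_normed_vector) \<Rightarrow> bool" where
  "unit_column T \<longleftrightarrow> (\<exists>k. norm k = 1 \<and> (T = (\<lambda>u. fst u *\<^sub>R k) \<or> T = (\<lambda>u. snd u *\<^sub>R k)))"

lemma dim_range_unit_column: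
  fixes T :: "real \<times> real \<Rightarrow> 'h::real_normed_vector"
  assumes "unit_column T"
  shows "dim (range T) = 1"
proof -
  obtain k where "k \<noteq> 0" and T: "T = (\<lambda>u. fst u *\<^sub>R k) \<or> T = (\<lambda>u. snd u *\<^sub>R k)"
    using assms unfolding unit_column_def by force
  have "range (\<lambda>u::real \<times> real. fst u *\<^sub>R k) = range (\<lambda>c. c *\<^sub>R k)"
    "range (\<lambda>u::real \<times> real. snd u *\<^sub>R k) = range (\<lambda>c. c *\<^sub>R k)"
    by (force intro: image_eqI[where x="(_, 0)"] image_eqI[where x="(0, _)"])+
  then have "range T = span {k}" using T by (auto simp: span_singleton)
  then show ?thesis using \<open>k \<noteq> 0\<close> by (simp add: dim_eq_card_independent)
qed

text \<open>The squared Hilbert norm of \<open>k + t v\<close> has a term \<open>t\<^sup>2 \<parallel>v\<parallel>\<^sup>2\<close> that a bound of order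
  \<open>t\<^sup>4\<close> cannot absorb.\<close>

lemma eq_0_if_norm_add_scaleR_power4_le:
  fixes k v :: "'a::real_inner"
  assumes k: "norm k = 1" and bound: "\<And>t. norm (k + t *\<^sub>R v)^4 \<le> 1 + t^4"
  shows "v = 0"
proof -
  define c where "c = inner k v"
  define w where "w = inner v v"
  have "inner k k = 1" using k by (simp add: norm_eq_1)
  then have expand: "norm (k + t *\<^sub>R v)^2 = 1 + 2*t*c + t^2*w" for t
    unfolding power2_norm_eq_inner c_def w_def
    by (simp add: inner_commute[of v k] algebra_simps power2_eq_square)
  have first_order: "4*t*c + 2*t^2*w \<le> t^4" for t
  proof -
    have "norm (k + t *\<^sub>R v)^4 = (norm (k + t *\<^sub>R v)^2)^2" by algebra
    then have "(1 + 2*t*c + t^2*w)^2 \<le> 1 + t^4" using bound[of t] unfolding expand by simp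
    moreover have "(1 + 2*t*c + t^2*w)^2 = 1 + (4*t*c + 2*t^2*w) + (2*t*c + t^2*w)^2" by algebra
    moreover have "0 \<le> (2*t*c + t^2*w)^2" by simp
    ultimately show ?thesis by linarith
  qed
  have second_order: "2*t^2*w \<le> t^4" for t
    using first_order[of t] first_order[of "-t"] by simp
  have "w \<le> 0"
  proof (rule ccontr)
    assume "\<not> w \<le> 0"
    then have "sqrt w ^ 2 = w" "sqrt w ^ 4 = w^2"
      using real_sqrt_pow2[of w] power_mult[of "sqrt w" 2 2] by simp_all
    then have "2*w*w \<le> w*w" using second_order[of "sqrt w"] by (simp add: power2_eq_square)
    then show False using \<open>\<not> w \<le> 0\<close> by (simp add: mult_le_0_iff)
  qed
  then show "v = 0" using inner_ge_zero[of v] by (simp add: w_def)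
qed

lemma unit_ball4_eq_fst_column:
  fixes S :: "real \<times> real \<Rightarrow> 'h::real_inner"
  assumes S: "S \<in> unit_ball4" and norm1: "norm (S (1, 0)) = 1"
  shows "S = (\<lambda>u. fst u *\<^sub>R S (1, 0))"
proof -
  have lin: "linear S" and bound: "\<And>x y. norm (S (x, y))^4 \<le> x^4 + y^4"
    using S by (simp_all add: unit_ball4_iff)
  have "norm (S (1, 0) + t *\<^sub>R S (0, 1))^4 \<le> 1 + t^4" for t
  proof -
    have "S (1, t) = S (1, 0) + t *\<^sub>R S (0, 1)" using linear_on_pair[OF lin, of "(1, t)"] by simp
    then show ?thesis using bound[of 1 t] by simp
  qed
  then have "S (0, 1) = 0" by (rule eq_0_if_norm_add_scaleR_power4_le[OF norm1])
  show ?thesis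
  proof
    fix u
    show "S u = fst u *\<^sub>R S (1, 0)" using linear_on_pair[OF lin, of u] \<open>S (0, 1) = 0\<close> by simp
  qed
qed

lemma unit_ball4_eq_snd_column:
  fixes S :: "real \<times> real \<Rightarrow> 'h::real_inner"
  assumes S: "S \<in> unit_ball4" and norm1: "norm (S (0, 1)) = 1"
  shows "S = (\<lambda>u. snd u *\<^sub>R S (0, 1))"
proof -
  have lin: "linear S" and bound: "\<And>x y. norm (S (x, y))^4 \<le> x^4 + y^4"
    using S by (simp_all add: unit_ball4_iff)
  have "norm (S (0, 1) + t *\<^sub>R S (1, 0))^4 \<le> 1 + t^4" for t
  proof -
    have "S (t, 1) = S (0, 1) + t *\<^sub>R S (1, 0)" using linear_on_pair[OF lin, of "(t, 1)"] by simp
    then show ?thesis using bound[of t 1] by (simp add: add.commute)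
  qed
  then have "S (1, 0) = 0" by (rule eq_0_if_norm_add_scaleR_power4_le[OF norm1])
  show ?thesis
  proof
    fix u
    show "S u = snd u *\<^sub>R S (0, 1)" using linear_on_pair[OF lin, of u] \<open>S (1, 0) = 0\<close> by simp
  qed
qed

lemma eq_if_norm_convex_combination_eq_1:
  fixes a b :: "'a::real_inner"
  assumes "norm a \<le> 1" "norm b \<le> 1" "0 < t" "t < 1"
    and "norm (t *\<^sub>R a + (1 - t) *\<^sub>R b) = 1"
  shows "a = b"
proof -
  have "norm (t *\<^sub>R a + (1 - t) *\<^sub>R b)^2 + t*(1 - t)*norm (a - b)^2
      = t*norm a^2 + (1 - t)*norm b^2"
    unfolding power2_norm_eq_inner
    by (simp add: inner_commute[of b a] algebra_simps power2_eq_square)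
  moreover have "t*norm a^2 + (1 - t)*norm b^2 \<le> t + (1 - t)"
    using assms by (intro add_mono) (simp_all add: abs_square_le_1 mult_left_le)
  ultimately have "t*(1 - t)*norm (a - b)^2 \<le> 0" using assms(5) by simp
  then show ?thesis using assms(3,4) by (simp add: mult_le_0_iff)
qed

lemma extreme_contraction_if_determined_at:
  fixes T :: "real \<times> real \<Rightarrow> 'h::real_inner"
  assumes T: "T \<in> unit_ball4" "opnorm4 T = 1" and e: "norm4 e = 1" "norm (T e) = 1"
    and determined: "\<And>S. S \<in> unit_ball4 \<Longrightarrow> S e = T e \<Longrightarrow> S = T"
  shows "extreme_contraction T"
proof -
  have "S1 = S2"
    if S: "S1 \<in> unit_ball4" "S2 \<in> unit_ball4" and t: "0 < t" "t < 1"
      and T_eq: "T = (\<lambda>u. t *\<^sub>R S1 u + (1 - t) *\<^sub>R S2 u)" for S1 S2 and t :: real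
  proof -
    have Te: "T e = t *\<^sub>R S1 e + (1 - t) *\<^sub>R S2 e" using T_eq by simp
    have "S1 e = S2 e"
      using norm_le_1_if_unit_ball4[OF S(1) e(1)] norm_le_1_if_unit_ball4[OF S(2) e(1)] t
      by (rule eq_if_norm_convex_combination_eq_1) (use e(2) Te in simp)
    then have "S1 e = T e" "S2 e = T e" using Te by (simp_all flip: scaleR_add_left)
    then have "S1 = T" "S2 = T" using determined S by blast+
    then show "S1 = S2" by simp
  qed
  then show ?thesis using T unfolding extreme_contraction_def unit_ball4_def by blast
qed

lemma extreme_contraction_fst_column:
  fixes k :: "'h::real_inner"
  assumes k: "norm k = 1"
  shows "extreme_contraction (\<lambda>u. fst u *\<^sub>R k)" (is "extreme_contraction ?T")
proof (rule extreme_contraction_if_determined_at)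
  show "?T \<in> unit_ball4" "opnorm4 ?T = 1"
    using k by (simp_all add: unit_ball4_def linear_fst_column opnorm4_fst_column)
  show "norm4 (1, 0) = 1" "norm (?T (1, 0)) = 1" using k by (simp_all add: norm4_eq_1_iff)
  fix S
  assume S: "S \<in> unit_ball4" "S (1, 0) = ?T (1, 0)"
  then have "S = (\<lambda>u. fst u *\<^sub>R S (1, 0))" using k by (intro unit_ball4_eq_fst_column) simp_all
  also have "\<dots> = ?T" using S(2) by simp
  finally show "S = ?T" .
qed

lemma extreme_contraction_snd_column:
  fixes k :: "'h::real_inner"
  assumes k: "norm k = 1"
  shows "extreme_contraction (\<lambda>u. snd u *\<^sub>R k)" (is "extreme_contraction ?T")
proof (rule extreme_contraction_if_determined_at)
  show "?T \<in> unit_ball4" "opnorm4 ?T = 1"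
    using k by (simp_all add: unit_ball4_def linear_snd_column opnorm4_snd_column)
  show "norm4 (0, 1) = 1" "norm (?T (0, 1)) = 1" using k by (simp_all add: norm4_eq_1_iff)
  fix S
  assume S: "S \<in> unit_ball4" "S (0, 1) = ?T (0, 1)"
  then have "S = (\<lambda>u. snd u *\<^sub>R S (0, 1))" using k by (intro unit_ball4_eq_snd_column) simp_all
  also have "\<dots> = ?T" using S(2) by simp
  finally show "S = ?T" .
qed

lemma extreme_contraction_if_unit_column:
  fixes T :: "real \<times> real \<Rightarrow> 'h::real_inner"
  shows "unit_column T \<Longrightarrow> extreme_contraction T"
  unfolding unit_column_def using extreme_contraction_fst_column extreme_contraction_snd_column by blast

lemma rank_one_linear_obtain:
  fixes T :: "real \<times> real \<Rightarrow> 'h::real_normed_vector"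
  assumes T: "linear T" and rank: "dim (range T) = 1"
  obtains h a b where "norm h = 1" "T = (\<lambda>u. (a * fst u + b * snd u) *\<^sub>R h)"
proof -
  obtain B where B: "independent B" "range T \<subseteq> span B" "card B = 1"
    using basis_exists[of "range T"] rank by metis
  then obtain g where g: "B = {g}" by (auto simp: card_1_singleton_iff)
  then have "g \<noteq> 0" using B(1) by auto
  have "T (1, 0) \<in> span {g}" "T (0, 1) \<in> span {g}" using B(2) g by auto
  then obtain c d where cd: "T (1, 0) = c *\<^sub>R g" "T (0, 1) = d *\<^sub>R g" by (auto simp: span_singleton)
  have "T u = ((c * norm g) * fst u + (d * norm g) * snd u) *\<^sub>R (g /\<^sub>R norm g)" for u
    using linear_on_pair[OF T, of u] \<open>g \<noteq> 0\<close> by (simp add: cd algebra_simps)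
  then have "T = (\<lambda>u. ((c * norm g) * fst u + (d * norm g) * snd u) *\<^sub>R (g /\<^sub>R norm g))" ..
  moreover have "norm (g /\<^sub>R norm g) = 1" using \<open>g \<noteq> 0\<close> by simp
  ultimately show thesis using that by blast
qed

lemma exists_unit_orthogonal:
  fixes h x y :: "'h::real_inner"
  assumes "x \<noteq> y" "independent {x, y}"
  obtains k where "norm k = 1" "orthogonal k h"
proof -
  have "\<not> {x, y} \<subseteq> span {h}"
  proof
    assume "{x, y} \<subseteq> span {h}"
    then have "card {x, y} \<le> card {h}" using independent_span_bound assms(2) by blast
    then show False using assms(1) by simp
  qed
  then obtain z where z: "z \<notin> span {h}" by blast
  define k where "k = z - (inner z h / inner h h) *\<^sub>R h"
  have "(inner z h / inner h h) *\<^sub>R h \<in> span {h}" by (intro span_scale span_base) simp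
  then have "k \<noteq> 0" using z by (auto simp: k_def)
  moreover have "orthogonal k h" by (auto simp: k_def orthogonal_def inner_diff_left)
  ultimately show thesis using that[of "k /\<^sub>R norm k"] by simp
qed

lemma not_extreme_contraction_if_symmetric_perturbation:
  assumes "(\<lambda>u. T u + P u) \<in> unit_ball4" "(\<lambda>u. T u - P u) \<in> unit_ball4" "P \<noteq> (\<lambda>u. 0)"
  shows "\<not> extreme_contraction T"
proof
  assume "extreme_contraction T"
  then have ext: "\<forall>S1\<in>unit_ball4. \<forall>S2\<in>unit_ball4. \<forall>t::real. 0 < t \<and> t < 1 \<and>
      T = (\<lambda>u. t *\<^sub>R S1 u + (1 - t) *\<^sub>R S2 u) \<longrightarrow> S1 = S2"
    unfolding extreme_contraction_def by blast
  have "0 < (1/2::real) \<and> (1/2::real) < 1 \<and>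
      T = (\<lambda>u. (1/2) *\<^sub>R (T u + P u) + (1 - 1/2) *\<^sub>R (T u - P u))"
    by (simp add: fun_eq_iff algebra_simps flip: scaleR_add_left)
  then have "(\<lambda>u. T u + P u) = (\<lambda>u. T u - P u)" by (rule ext[rule_format, OF assms(1,2)])
  then have "P u + P u = 0" for u by (metis add_left_cancel diff_conv_add_uminus eq_neg_iff_add_eq_0)
  then have "P u = 0" for u by (metis scaleR_2 scaleR_eq_0_iff zero_neq_numeral)
  then show False using assms(3) by auto
qed

lemma rank_one_perturbation_in_unit_ball4:
  fixes h k :: "'h::real_inner"
  assumes h: "norm h = 1" and k: "norm k = 1" and hk: "orthogonal k h"
    and sr: "s^4 + r^4 \<le> 1" and c: "c^2 \<le> (r * s)^8 / 4"
  shows "(\<lambda>u. (s^3 * fst u + r^3 * snd u) *\<^sub>R h + (c * (r * fst u - s * snd u)) *\<^sub>R k) \<in> unit_ball4"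
    (is "?S \<in> unit_ball4")
proof -
  have "orthogonal (\<alpha> *\<^sub>R h) (\<beta> *\<^sub>R k)" for \<alpha> \<beta>
    using hk by (simp add: orthogonal_clauses orthogonal_commute)
  then have sq: "norm (?S (x, y))^2 = (s^3*x + r^3*y)^2 + c^2 * (r*x - s*y)^2" for x y
    using h k by (simp add: norm_add_Pythagorean power_mult_distrib)
  have "norm (?S (x, y))^4 \<le> x^4 + y^4" for x y
    using perturbation_bound[OF sr _ c, of x y] unfolding sq[of x y, symmetric] by (simp flip: power_mult)
  moreover have "linear ?S" by (intro linearI) (simp_all add: algebra_simps)
  ultimately show ?thesis by (simp add: unit_ball4_iff)
qed

lemma not_extreme_contraction_rank_one:
  fixes h k :: "'h::real_inner"
  assumes a: "a \<noteq> 0" and b: "b \<noteq> 0" and h: "norm h = 1" and k: "norm k = 1"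
    and hk: "orthogonal k h"
  shows "\<not> extreme_contraction (\<lambda>u. (a * fst u + b * snd u) *\<^sub>R h)"
    (is "\<not> extreme_contraction ?T")
proof
  assume "extreme_contraction ?T"
  then have "?T \<in> unit_ball4" unfolding extreme_contraction_def by blast
  then have bound: "(a*x + b*y)^4 \<le> x^4 + y^4" for x y
    using h by (simp add: unit_ball4_iff power_mult_distrib)
  define s r where "s = root 3 a" and "r = root 3 b"
  have s3: "s^3 = a" "r^3 = b" by (simp_all add: s_def r_def odd_real_root_pow)
  have "(s^3*x + r^3*y)^4 \<le> x^4 + y^4" for x y unfolding s3 by (rule bound)
  then have sr: "s^4 + r^4 \<le> 1" by (rule sum_power4_le_1_if_dual_bound)
  text \<open>The functional \<open>(a, b)\<close> attains its norm in the direction \<open>(s, r)\<close>, where the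
    perturbation \<open>P\<close> vanishes.\<close>
  define \<delta> where "\<delta> = (r * s)^4 / 2"
  define P where "P u = (\<delta> * (r * fst u - s * snd u)) *\<^sub>R k" for u
  have "\<delta>^2 \<le> (r * s)^8 / 4" "(- \<delta>)^2 \<le> (r * s)^8 / 4"
    by (simp_all add: \<delta>_def power_divide flip: power_mult)
  from this[THEN rank_one_perturbation_in_unit_ball4[OF h k hk sr]]
  have "(\<lambda>u. ?T u + P u) \<in> unit_ball4" "(\<lambda>u. ?T u - P u) \<in> unit_ball4"
    by (simp_all add: P_def s3)
  moreover have "P (1, 0) \<noteq> 0" using a b k by (auto simp: P_def \<delta>_def s_def r_def)
  then have "P \<noteq> (\<lambda>u. 0)" by auto
  ultimately have "\<not> extreme_contraction ?T" by (rule not_extreme_contraction_if_symmetric_perturbation)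
  then show False using \<open>extreme_contraction ?T\<close> by contradiction
qed

lemma unit_column_if_coefficient_vanishes:
  fixes h :: "'h::real_normed_vector"
  assumes h: "norm h = 1" and T: "T = (\<lambda>u. (a * fst u + b * snd u) *\<^sub>R h)"
    and norm1: "opnorm4 T = 1" and ab: "a = 0 \<or> b = 0"
  shows "unit_column T"
  using ab
proof
  assume "b = 0"
  then have T': "T = (\<lambda>u. fst u *\<^sub>R (a *\<^sub>R h))" by (simp add: T mult.commute)
  moreover have "norm (a *\<^sub>R h) = 1" using norm1 unfolding T' opnorm4_fst_column .
  ultimately show ?thesis unfolding unit_column_def by blast
next
  assume "a = 0"
  then have T': "T = (\<lambda>u. snd u *\<^sub>R (b *\<^sub>R h))" by (simp add: T mult.commute)
  moreover have "norm (b *\<^sub>R h) = 1" using norm1 unfolding T' opnorm4_snd_column .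
  ultimately show ?thesis unfolding unit_column_def by blast
qed

lemma extreme_contraction_rank_one_iff_unit_column:
  fixes T :: "real \<times> real \<Rightarrow> 'h::real_inner" and x y :: 'h
  assumes xy: "x \<noteq> y" "independent {x, y}"
    and T: "linear T" "dim (range T) = 1" "opnorm4 T = 1"
  shows "extreme_contraction T \<longleftrightarrow> unit_column T"
proof
  assume extreme: "extreme_contraction T"
  obtain h a b where h: "norm h = 1" and T_eq: "T = (\<lambda>u. (a * fst u + b * snd u) *\<^sub>R h)"
    using rank_one_linear_obtain[OF T(1,2)] by blast
  obtain k where "norm k = 1" "orthogonal k h" using exists_unit_orthogonal[OF xy] by blast
  then have "a = 0 \<or> b = 0" using not_extreme_contraction_rank_one[OF _ _ h] extreme T_eq by blast
  then show "unit_column T" by (rule unit_column_if_coefficient_vanishes[OF h T_eq T(3)])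
qed (rule extreme_contraction_if_unit_column)

lemma MT_eq_axis_pair_iff_unit_column:
  fixes T :: "real \<times> real \<Rightarrow> 'h::real_inner"
  assumes T: "linear T" "opnorm4 T = 1"
  shows "MT T = {(1, 0), (-1, 0)} \<or> MT T = {(0, 1), (0, -1)} \<longleftrightarrow> unit_column T"
proof
  have ball: "T \<in> unit_ball4" using T by (simp add: unit_ball4_def)
  assume "MT T = {(1, 0), (-1, 0)} \<or> MT T = {(0, 1), (0, -1)}"
  then have "(1, 0) \<in> MT T \<or> (0, 1) \<in> MT T" by blast
  then show "unit_column T"
  proof
    assume "(1, 0) \<in> MT T"
    then have "norm (T (1, 0)) = 1" using T(2) by (simp add: MT_def)
    then show ?thesis using unit_ball4_eq_fst_column[OF ball] unfolding unit_column_def by metis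
  next
    assume "(0, 1) \<in> MT T"
    then have "norm (T (0, 1)) = 1" using T(2) by (simp add: MT_def)
    then show ?thesis using unit_ball4_eq_snd_column[OF ball] unfolding unit_column_def by metis
  qed
next
  assume "unit_column T"
  then obtain k where "k \<noteq> 0" "T = (\<lambda>u. fst u *\<^sub>R k) \<or> T = (\<lambda>u. snd u *\<^sub>R k)"
    unfolding unit_column_def by force
  then show "MT T = {(1, 0), (-1, 0)} \<or> MT T = {(0, 1), (0, -1)}"
    using MT_fst_column MT_snd_column by metis
qed

lemma exists_independent_pair_vec:
  assumes "CARD('n::finite) \<ge> 2"
  shows "\<exists>x y :: real ^ 'n. x \<noteq> y \<and> independent {x, y}"
proof -
  obtain S :: "'n set" where "card S = 2" using ex_card[OF assms] by blast
  then obtain i j :: 'n where "i \<noteq> j" by (auto simp: card_2_iff)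
  then have "axis i 1 \<noteq> (axis j 1 :: real ^ 'n)" by (simp add: axis_eq_axis)
  moreover have "independent {axis i 1, axis j 1 :: real ^ 'n}"
    by (rule independent_mono[OF independent_Basis]) (auto simp: Basis_vec_def)
  ultimately show ?thesis by blast
qed

lemma norm_eq_1_iff_sum_squares:
  fixes x :: "real ^ 'n"
  shows "norm x = 1 \<longleftrightarrow> (\<Sum>i\<in>UNIV. (x $ i)^2) = 1"
  by (simp add: norm_vec_def L2_set_def)

theorem mainTheorem14:
  shows "((\<exists>x y :: 'h::{real_inner, complete_space}. x \<noteq> y \<and> independent {x, y}) \<longrightarrow>
          (\<forall>T :: real \<times> real \<Rightarrow> 'h. linear T \<and> dim (range T) = 1 \<and> opnorm4 T = 1 \<longrightarrow>
             (extreme_contraction T \<longleftrightarrow>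
                (MT T = {(1, 0), (-1, 0)} \<or> MT T = {(0, 1), (0, -1)}))))
       \<and> (CARD('n::finite) \<ge> 2 \<longrightarrow>
          (\<forall>T :: real \<times> real \<Rightarrow> real ^ 'n.
             (linear T \<and> dim (range T) = 1 \<and> extreme_contraction T) \<longleftrightarrow>
             (\<exists>x :: real ^ 'n. (\<Sum>i\<in>UNIV. (x $ i) ^ 2) = 1 \<and>
                 (T = (\<lambda>u. fst u *\<^sub>R x) \<or> T = (\<lambda>u. snd u *\<^sub>R x)))))"
proof (intro conjI impI allI)
  fix T :: "real \<times> real \<Rightarrow> 'h"
  assume "\<exists>x y :: 'h. x \<noteq> y \<and> independent {x, y}"
    and "linear T \<and> dim (range T) = 1 \<and> opnorm4 T = 1"
  then obtain x y :: 'h where xy: "x \<noteq> y" "independent {x, y}"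
    and T: "linear T" "dim (range T) = 1" "opnorm4 T = 1" by blast
  show "extreme_contraction T \<longleftrightarrow> (MT T = {(1, 0), (-1, 0)} \<or> MT T = {(0, 1), (0, -1)})"
    using extreme_contraction_rank_one_iff_unit_column[OF xy T]
      MT_eq_axis_pair_iff_unit_column[OF T(1,3)] by simp
next
  fix T :: "real \<times> real \<Rightarrow> real ^ 'n"
  assume "CARD('n) \<ge> 2"
  then obtain x y :: "real ^ 'n" where xy: "x \<noteq> y" "independent {x, y}"
    using exists_independent_pair_vec by blast
  have "linear T \<and> dim (range T) = 1 \<and> extreme_contraction T \<longleftrightarrow> unit_column T"
  proof
    assume T: "linear T \<and> dim (range T) = 1 \<and> extreme_contraction T"
    then have "opnorm4 T = 1" unfolding extreme_contraction_def by blast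
    then show "unit_column T" using extreme_contraction_rank_one_iff_unit_column[OF xy] T by blast
  next
    assume "unit_column T"
    moreover from this have "extreme_contraction T" by (rule extreme_contraction_if_unit_column)
    ultimately show "linear T \<and> dim (range T) = 1 \<and> extreme_contraction T"
      using dim_range_unit_column unfolding extreme_contraction_def by blast
  qed
  then show "linear T \<and> dim (range T) = 1 \<and> extreme_contraction T \<longleftrightarrow>
      (\<exists>x :: real ^ 'n. (\<Sum>i\<in>UNIV. (x $ i) ^ 2) = 1 \<and>
         (T = (\<lambda>u. fst u *\<^sub>R x) \<or> T = (\<lambda>u. snd u *\<^sub>R x)))"
    unfolding unit_column_def norm_eq_1_iff_sum_squares .
qed

end
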